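(* Let $\alpha\in\mathbb{R}$ and $\mathbb{Q}[x]^+_{x=\alpha}=\{p\in\mathbb{Q}[x]:p(\alpha)>0\}$. For real $\beta\neq\gamma$ let $S_{\beta,\gamma}=\{p\in\mathbb{Q}[x]: p(\beta)>p(\gamma)\}$; for $z\in\mathbb{C}\setminus\mathbb{R}$ let $S_{z,\bar z}=\{p\in\mathbb{Q}[x]:\operatorname{Im}p(z)>0\}$; for $\delta\in\mathbb{R}$ let $S^+_\delta=\{p\in\mathbb{Q}[x]:p'(\delta)>0\}$ and $S^-_\delta=\{p\in\mathbb{Q}[x]:p'(\delta)<0\}$. Then: (1) for all $\beta,\gamma\in\mathbb{R}\setminus\{\alpha\}$ with $\beta\ne\gamma$, the set $S_{\beta,\gamma}\cap\mathbb{Q}[x]^+_{x=\alpha}$ is not closed under multiplication; moreover, for every $\beta\neq\alpha$, the set $S_{\alpha,\beta}\cap\mathbb{Q}[x]^+_{x=\alpha}$ is not closed under multiplication; (2) for every $z\in\mathbb{C}\setminus\mathbb{R}$, the set $S_{z,\bar z}\cap\mathbb{Q}[x]^+_{x=\alpha}$ is not closed under multiplication; (3) for every real $\delta\neq\alpha$, neither $S^+_\delta\cap\mathbb{Q}[x]^+_{x=\alpha}$ nor $S^-_\delta\cap\mathbb{Q}[x]^+_{x=\alpha}$ is closed under multiplication. *)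

theory Defs
  imports "HOL-Computational_Algebra.Polynomial" Complex_Main
begin

definition reval :: "rat poly \<Rightarrow> real \<Rightarrow> real" where
  "reval p x = poly (map_poly of_rat p) x"

definition ceval :: "rat poly \<Rightarrow> complex \<Rightarrow> complex" where
  "ceval p z = poly (map_poly of_rat p) z"

definition pos_at :: "real \<Rightarrow> rat poly set" where
  "pos_at \<alpha> = {p. reval p \<alpha> > 0}"

definition S_real :: "real \<Rightarrow> real \<Rightarrow> rat poly set" where
  "S_real \<beta> \<gamma> = {p. reval p \<beta> > reval p \<gamma>}"

definition S_cplx :: "complex \<Rightarrow> rat poly set" where
  "S_cplx z = {p. Im (ceval p z) > 0}"

definition S_plus :: "real \<Rightarrow> rat poly set" where
  "S_plus \<delta> = {p. reval (pderiv p) \<delta> > 0}"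

definition S_minus :: "real \<Rightarrow> rat poly set" where
  "S_minus \<delta> = {p. reval (pderiv p) \<delta> < 0}"

definition mult_closed :: "rat poly set \<Rightarrow> bool" where
  "mult_closed S \<longleftrightarrow> (\<forall>p\<in>S. \<forall>q\<in>S. p * q \<in> S)"

end

theory Submission
  imports Defs
begin

(*
  In each case we exhibit p, q in the set (mostly q = p) whose product leaves it.

  For S_{beta,gamma} and S_{alpha,beta} the witnesses are only constrained by their values at two
  or three real points, up to an error of 1/2: interpolate the values by a real polynomial and
  approximate it on a disc by one with rational coefficients. With p ~ 1, 1, -1 and q ~ 1, -1, -2
  at alpha, beta, gamma the product pq is negative at beta but positive at gamma; with p ~ 1, -2 at
  alpha, beta we get p(alpha)^2 < p(beta)^2. For S_{z, conj z} the same approximation gives p with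
  p(alpha) > 0 and p(z) close to -1 + i, so Im (p(z)^2) = 2 Re p(z) Im p(z) < 0.

  For S^+_delta and S^-_delta take p = (X - r)(X - t) with rationals r < delta < t and alpha
  outside [r, t]. Then p(alpha) > 0 > p(delta), so (p^2)'(delta) = 2 p(delta) p'(delta) has the
  sign opposite to p'(delta) = 2 delta - r - t, and either sign of the latter can be arranged.
*)

lemma of_real_of_rat: "(of_real (of_rat q) :: 'a::{real_field,field_char_0}) = of_rat q"
  by (cases q) (simp add: of_rat_rat)

lemma map_poly_of_rat_add:
  "map_poly (of_rat :: rat \<Rightarrow> 'a::field_char_0) (p + q) = map_poly of_rat p + map_poly of_rat q"
  by (intro poly_eqI) (simp add: coeff_map_poly of_rat_add)

lemma map_poly_of_rat_mult:
  "map_poly (of_rat :: rat \<Rightarrow> 'a::field_char_0) (p * q) = map_poly of_rat p * map_poly of_rat q"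
  by (intro poly_eqI) (simp add: coeff_mult coeff_map_poly of_rat_sum of_rat_mult)

lemma reval_add: "reval (p + q) x = reval p x + reval q x"
  by (simp add: reval_def map_poly_of_rat_add)

lemma reval_mult: "reval (p * q) x = reval p x * reval q x"
  by (simp add: reval_def map_poly_of_rat_mult)

lemma ceval_mult: "ceval (p * q) z = ceval p z * ceval q z"
  by (simp add: ceval_def map_poly_of_rat_mult)

lemma reval_pCons [simp]: "reval (pCons a p) x = of_rat a + x * reval p x"
  by (simp add: reval_def map_poly_pCons)

lemma reval_0 [simp]: "reval 0 x = 0"
  by (simp add: reval_def)

lemma poly_map_poly_of_real:
  "poly (map_poly of_real P) (of_real x :: 'a::{real_algebra_1,comm_semiring_0}) = of_real (poly P x)"
  by (induction P) (simp_all add: map_poly_pCons)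

lemma ceval_of_real: "ceval p (of_real x) = of_real (reval p x)"
proof -
  have "map_poly (of_rat :: rat \<Rightarrow> complex) p = map_poly of_real (map_poly of_rat p)"
    by (simp add: map_poly_map_poly o_def of_real_of_rat)
  then show ?thesis
    by (simp add: ceval_def reval_def poly_map_poly_of_real)
qed

lemma poly_interpolation_exists:
  fixes f :: "'a::field \<Rightarrow> 'a"
  assumes "finite A"
  shows "\<exists>P. \<forall>x\<in>A. poly P x = f x"
  using assms
proof (induction A rule: finite_induct)
  case (insert a A)
  then obtain P where P: "\<forall>x\<in>A. poly P x = f x"
    by blast
  define N where "N = (\<Prod>b\<in>A. [:-b, 1:])"
  have N_A: "poly N x = 0" if "x \<in> A" for x
    using that insert.hyps(1) by (auto simp: N_def poly_prod)
  have N_a: "poly N a \<noteq> 0"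
    using insert.hyps by (auto simp: N_def poly_prod)
  define Q where "Q = P + smult ((f a - poly P a) / poly N a) N"
  have "\<forall>x\<in>insert a A. poly Q x = f x"
    using P N_A N_a by (auto simp: Q_def)
  then show ?case ..
qed simp

lemma real_poly_interpolation_nonreal:
  fixes z w :: complex and x c :: real
  assumes "Im z \<noteq> 0"
  shows "\<exists>P. poly P x = c \<and> poly (map_poly of_real P) z = w"
proof -
  define v where "v = Im w / Im z"
  define L where "L = [:Re w - v * Re z, v:]"
  \<comment> \<open>\<open>N = (X - z) (X - cnj z)\<close> vanishes at \<open>z\<close> and is positive on the real line\<close>
  define N where "N = [:Re z ^ 2 + Im z ^ 2, -2 * Re z, 1:]"
  have L_z: "poly (map_poly of_real L) z = w"
    using assms by (simp add: L_def v_def map_poly_pCons complex_eq_iff)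
  have N_z: "poly (map_poly of_real N) z = 0"
    by (simp add: N_def map_poly_pCons complex_eq_iff power2_eq_square algebra_simps)
  have N_x: "poly N x = (x - Re z) ^ 2 + Im z ^ 2"
    by (simp add: N_def power2_eq_square algebra_simps)
  then have "poly N x > 0"
    using assms by (simp add: add_nonneg_pos)
  define k where "k = (c - poly L x) / poly N x"
  define P where "P = L + smult k N"
  have "poly P x = c"
    using \<open>poly N x > 0\<close> by (simp add: P_def k_def)
  moreover have "map_poly complex_of_real P = map_poly of_real L + smult (of_real k) (map_poly of_real N)"
    by (intro poly_eqI) (simp add: P_def coeff_map_poly)
  then have "poly (map_poly of_real P) z = w"
    using L_z N_z by simp
  ultimately show ?thesis
    by blast
qed

lemma rat_poly_approx_on_cball:
  fixes P :: "real poly"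
  assumes "e > 0"
  shows "\<exists>p. \<forall>w. cmod w \<le> R \<longrightarrow> cmod (ceval p w - poly (map_poly of_real P) w) < e"
  using assms
proof (induction P arbitrary: e)
  case 0
  then show ?case
    by (intro exI[of _ 0]) (simp add: ceval_def)
next
  case (pCons c P)
  define e' where "e' = e / (2 * (\<bar>R\<bar> + 1))"
  have "e' > 0" "\<bar>R\<bar> * e' \<le> e / 2"
    using pCons.prems by (auto simp: e'_def field_simps)
  obtain c' :: rat where "c - e / 2 < of_rat c'" "of_rat c' < c + e / 2"
    using of_rat_dense[of "c - e / 2" "c + e / 2"] pCons.prems by auto
  then have c': "\<bar>of_rat c' - c\<bar> < e / 2"
    unfolding abs_less_iff by linarith
  obtain p where p: "\<And>w. cmod w \<le> R \<Longrightarrow> cmod (ceval p w - poly (map_poly of_real P) w) < e'"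
    using pCons.IH[OF \<open>e' > 0\<close>] by blast
  have "cmod (ceval (pCons c' p) w - poly (map_poly of_real (pCons c P)) w) < e"
    if w: "cmod w \<le> R" for w
  proof -
    have "ceval (pCons c' p) w - poly (map_poly of_real (pCons c P)) w
        = of_real (of_rat c' - c) + w * (ceval p w - poly (map_poly of_real P) w)"
      by (simp add: ceval_def map_poly_pCons algebra_simps
          of_real_of_rat [where 'a=complex, of c', symmetric])
    also have "cmod \<dots> \<le> \<bar>of_rat c' - c\<bar> + cmod w * cmod (ceval p w - poly (map_poly of_real P) w)"
      by (metis norm_mult norm_of_real norm_triangle_ineq)
    also have "cmod w * cmod (ceval p w - poly (map_poly of_real P) w) \<le> \<bar>R\<bar> * e'"
      using p[OF w] w by (intro mult_mono) auto
    finally show ?thesis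
      using c' \<open>\<bar>R\<bar> * e' \<le> e / 2\<close> by linarith
  qed
  then show ?case
    by blast
qed

lemma rat_poly_approx_at_points:
  fixes P :: "real poly"
  assumes "finite A" "e > 0"
  obtains p where "\<And>w. w \<in> A \<Longrightarrow> cmod (ceval p w - poly (map_poly of_real P) w) < e"
proof -
  obtain p where p: "\<And>w. cmod w \<le> (\<Sum>u\<in>A. cmod u) \<Longrightarrow>
      cmod (ceval p w - poly (map_poly of_real P) w) < e"
    using rat_poly_approx_on_cball[OF \<open>e > 0\<close>] by blast
  have "cmod w \<le> (\<Sum>u\<in>A. cmod u)" if "w \<in> A" for w
    using assms(1) that by (auto intro: member_le_sum)
  then show thesis
    using p that by blast
qed

lemma rat_poly_approx_interpolation:
  fixes f :: "real \<Rightarrow> real"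
  assumes "finite A" "e > 0"
  obtains p where "\<And>x. x \<in> A \<Longrightarrow> \<bar>reval p x - f x\<bar> < e"
proof -
  obtain P where P: "\<And>x. x \<in> A \<Longrightarrow> poly P x = f x"
    using poly_interpolation_exists[OF \<open>finite A\<close>] by blast
  obtain p where p: "\<And>w. w \<in> of_real ` A \<Longrightarrow> cmod (ceval p w - poly (map_poly of_real P) w) < e"
    by (rule rat_poly_approx_at_points[where A="of_real ` A" and e=e and P=P]) (use assms in auto)
  have "\<bar>reval p x - f x\<bar> < e" if "x \<in> A" for x
    using p[of "of_real x"] that
    by (simp add: P ceval_of_real poly_map_poly_of_real flip: of_real_diff)
  then show thesis
    by (rule that)
qed

lemma not_mult_closedI: "p \<in> S \<Longrightarrow> q \<in> S \<Longrightarrow> p * q \<notin> S \<Longrightarrow> \<not> mult_closed S"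
  unfolding mult_closed_def by blast

lemma not_mult_closed_S_real:
  assumes "\<beta> \<noteq> \<alpha>" "\<gamma> \<noteq> \<alpha>" "\<beta> \<noteq> \<gamma>"
  shows "\<not> mult_closed (S_real \<beta> \<gamma> \<inter> pos_at \<alpha>)"
proof -
  obtain p where p: "\<And>x. x \<in> {\<alpha>, \<beta>, \<gamma>} \<Longrightarrow> \<bar>reval p x - (if x = \<gamma> then -1 else 1)\<bar> < 1/2"
    by (rule rat_poly_approx_interpolation[where A="{\<alpha>, \<beta>, \<gamma>}" and e="1/2"
        and f="\<lambda>x. if x = \<gamma> then -1 else 1"]) auto
  obtain q where q: "\<And>x. x \<in> {\<alpha>, \<beta>, \<gamma>} \<Longrightarrow>
      \<bar>reval q x - (if x = \<alpha> then 1 else if x = \<beta> then -1 else -2)\<bar> < 1/2"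
    by (rule rat_poly_approx_interpolation[where A="{\<alpha>, \<beta>, \<gamma>}" and e="1/2"
        and f="\<lambda>x. if x = \<alpha> then 1 else if x = \<beta> then -1 else -2"])
      auto
  have "\<bar>reval p \<alpha> - 1\<bar> < 1/2" "\<bar>reval p \<beta> - 1\<bar> < 1/2" "\<bar>reval p \<gamma> + 1\<bar> < 1/2"
    using p[of \<alpha>] p[of \<beta>] p[of \<gamma>] assms by simp_all
  then have p_vals: "reval p \<alpha> > 0" "reval p \<beta> > 0" "reval p \<gamma> < 0"
    unfolding abs_less_iff by linarith+
  have "\<bar>reval q \<alpha> - 1\<bar> < 1/2" "\<bar>reval q \<beta> + 1\<bar> < 1/2" "\<bar>reval q \<gamma> + 2\<bar> < 1/2"
    using q[of \<alpha>] q[of \<beta>] q[of \<gamma>] assms by simp_all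
  then have q_vals: "reval q \<alpha> > 0" "reval q \<gamma> < reval q \<beta>" "reval q \<beta> < 0" "reval q \<gamma> < 0"
    unfolding abs_less_iff by linarith+
  have "reval (p * q) \<beta> < 0" "reval (p * q) \<gamma> > 0"
    using p_vals q_vals by (simp_all add: reval_mult mult_pos_neg mult_neg_neg)
  then show ?thesis
    using p_vals q_vals by (intro not_mult_closedI[of p _ q]) (auto simp: S_real_def pos_at_def)
qed

lemma not_mult_closed_S_real_at:
  assumes "\<beta> \<noteq> \<alpha>"
  shows "\<not> mult_closed (S_real \<alpha> \<beta> \<inter> pos_at \<alpha>)"
proof -
  obtain p where p: "\<And>x. x \<in> {\<alpha>, \<beta>} \<Longrightarrow> \<bar>reval p x - (if x = \<alpha> then 1 else -2)\<bar> < 1/2"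
    by (rule rat_poly_approx_interpolation[where A="{\<alpha>, \<beta>}" and e="1/2"
        and f="\<lambda>x. if x = \<alpha> then 1 else -2"]) auto
  have "\<bar>reval p \<alpha> - 1\<bar> < 1/2" "\<bar>reval p \<beta> + 2\<bar> < 1/2"
    using p[of \<alpha>] p[of \<beta>] assms by simp_all
  then have p_vals: "0 < reval p \<alpha>" "reval p \<alpha> < - reval p \<beta>"
    unfolding abs_less_iff by linarith+
  then have "reval p \<alpha> * reval p \<alpha> < reval p \<beta> * reval p \<beta>"
    using mult_strict_mono[of "reval p \<alpha>" "- reval p \<beta>" "reval p \<alpha>" "- reval p \<beta>"] by simp
  then show ?thesis
    using p_vals by (intro not_mult_closedI[of p _ p]) (auto simp: S_real_def pos_at_def reval_mult)
qed

lemma not_mult_closed_S_cplx: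
  assumes "z \<notin> \<real>"
  shows "\<not> mult_closed (S_cplx z \<inter> pos_at \<alpha>)"
proof -
  have "Im z \<noteq> 0"
    using assms complex_is_Real_iff by blast
  then obtain P where P: "poly P \<alpha> = 1" "poly (map_poly of_real P) z = Complex (-1) 1"
    using real_poly_interpolation_nonreal by blast
  obtain p where p: "\<And>w. w \<in> {of_real \<alpha>, z} \<Longrightarrow> cmod (ceval p w - poly (map_poly of_real P) w) < 1/2"
    by (rule rat_poly_approx_at_points[where A="{of_real \<alpha>, z}" and e="1/2" and P=P]) auto
  have "cmod (of_real (reval p \<alpha> - 1)) < 1/2"
    using p[of "of_real \<alpha>"] P by (simp add: ceval_of_real poly_map_poly_of_real)
  then have "\<bar>reval p \<alpha> - 1\<bar> < 1/2"
    by (simp only: norm_of_real)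
  then have p_\<alpha>: "reval p \<alpha> > 0"
    unfolding abs_less_iff by linarith
  have "\<bar>Re (ceval p z) + 1\<bar> < 1/2" "\<bar>Im (ceval p z) - 1\<bar> < 1/2"
    using p[of z] P abs_Re_le_cmod[of "ceval p z - Complex (-1) 1"]
      abs_Im_le_cmod[of "ceval p z - Complex (-1) 1"]
    by auto
  then have p_z: "Re (ceval p z) < 0" "Im (ceval p z) > 0"
    unfolding abs_less_iff by linarith+
  have "Im (ceval (p * p) z) = 2 * Re (ceval p z) * Im (ceval p z)"
    by (simp add: ceval_mult)
  also have "\<dots> < 0"
    using p_z by (simp add: mult_neg_pos)
  finally show ?thesis
    using p_\<alpha> p_z by (intro not_mult_closedI[of p _ p]) (auto simp: S_cplx_def pos_at_def)
qed

lemma reval_pderiv_square: "reval (pderiv (p * p)) x = 2 * reval p x * reval (pderiv p) x"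
  by (simp only: pderiv_mult reval_add reval_mult)

lemma not_mult_closed_S_plusI:
  assumes "reval p \<alpha> > 0" "reval p \<delta> < 0" "reval (pderiv p) \<delta> > 0"
  shows "\<not> mult_closed (S_plus \<delta> \<inter> pos_at \<alpha>)"
  using assms
  by (intro not_mult_closedI[of p _ p])
    (auto simp: S_plus_def pos_at_def reval_pderiv_square zero_less_mult_iff)

lemma not_mult_closed_S_minusI:
  assumes "reval p \<alpha> > 0" "reval p \<delta> < 0" "reval (pderiv p) \<delta> < 0"
  shows "\<not> mult_closed (S_minus \<delta> \<inter> pos_at \<alpha>)"
  using assms
  by (intro not_mult_closedI[of p _ p])
    (auto simp: S_minus_def pos_at_def reval_pderiv_square mult_less_0_iff)

lemma reval_monic_quadratic:
  "reval ([:-r, 1:] * [:-t, 1:]) x = (x - of_rat r) * (x - of_rat t)"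
  "reval (pderiv ([:-r, 1:] * [:-t, 1:])) x = 2 * x - of_rat r - of_rat t"
  by (simp_all add: reval_mult reval_add pderiv_mult pderiv_pCons
      of_rat_minus of_rat_mult of_rat_diff of_rat_add algebra_simps)

lemma rat_roots_around_below:
  fixes \<alpha> \<delta> :: real
  assumes "\<delta> \<noteq> \<alpha>"
  obtains r t :: rat where "of_rat r < \<delta>" "\<delta> < of_rat t" "\<alpha> \<notin> {of_rat r..of_rat t}"
    "of_rat r + of_rat t < 2 * \<delta>"
proof (cases "\<delta> < \<alpha>")
  case True
  obtain t where t: "\<delta> < of_rat t" "of_rat t < \<alpha>"
    using of_rat_dense[OF True] by blast
  obtain r where "2 * \<delta> - of_rat t - 1 < of_rat r" "of_rat r < 2 * \<delta> - of_rat t"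
    using of_rat_dense[of "2 * \<delta> - of_rat t - 1" "2 * \<delta> - of_rat t"] by auto
  with t show thesis
    by (intro that[of r t]) auto
next
  case False
  then have "\<alpha> < \<delta>"
    using assms by simp
  then obtain r where r: "\<alpha> < of_rat r" "of_rat r < \<delta>"
    using of_rat_dense by blast
  obtain t where "\<delta> < of_rat t" "of_rat t < 2 * \<delta> - of_rat r"
    using of_rat_dense[of \<delta> "2 * \<delta> - of_rat r"] r by auto
  with r show thesis
    by (intro that[of r t]) auto
qed

lemma rat_roots_around_above:
  fixes \<alpha> \<delta> :: real
  assumes "\<delta> \<noteq> \<alpha>"
  obtains r t :: rat where "of_rat r < \<delta>" "\<delta> < of_rat t" "\<alpha> \<notin> {of_rat r..of_rat t}"
    "of_rat r + of_rat t > 2 * \<delta>"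
proof -
  obtain r t :: rat where "of_rat r < - \<delta>" "- \<delta> < of_rat t" "- \<alpha> \<notin> {of_rat r..of_rat t}"
    "of_rat r + of_rat t < 2 * - \<delta>"
    by (rule rat_roots_around_below[where \<delta>="- \<delta>" and \<alpha>="- \<alpha>"]) (use assms in simp)
  then show thesis
    by (intro that[of "- t" "- r"]) (auto simp: of_rat_minus)
qed

lemma reval_monic_quadratic_signs:
  assumes "of_rat r < \<delta>" "\<delta> < of_rat t" "\<alpha> \<notin> {of_rat r..of_rat t}"
  shows "reval ([:-r, 1:] * [:-t, 1:]) \<alpha> > 0" "reval ([:-r, 1:] * [:-t, 1:]) \<delta> < 0"
proof -
  have "\<alpha> < of_rat r \<or> of_rat t < \<alpha>"
    using assms(3) by auto
  then show "reval ([:-r, 1:] * [:-t, 1:]) \<alpha> > 0"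
    unfolding reval_monic_quadratic
  proof
    assume "\<alpha> < of_rat r"
    then show "0 < (\<alpha> - of_rat r) * (\<alpha> - of_rat t)"
      using assms(1,2) by (intro mult_neg_neg) linarith+
  next
    assume "of_rat t < \<alpha>"
    then show "0 < (\<alpha> - of_rat r) * (\<alpha> - of_rat t)"
      using assms(1,2) by (intro mult_pos_pos) linarith+
  qed
  show "reval ([:-r, 1:] * [:-t, 1:]) \<delta> < 0"
    unfolding reval_monic_quadratic using assms(1,2) by (intro mult_pos_neg) linarith+
qed

lemma not_mult_closed_S_plus:
  assumes "\<delta> \<noteq> \<alpha>"
  shows "\<not> mult_closed (S_plus \<delta> \<inter> pos_at \<alpha>)"
proof -
  obtain r t where roots: "of_rat r < \<delta>" "\<delta> < of_rat t" "\<alpha> \<notin> {of_rat r..of_rat t}"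
    and "of_rat r + of_rat t < 2 * \<delta>"
    using rat_roots_around_below[OF assms] by blast
  then have "reval (pderiv ([:-r, 1:] * [:-t, 1:])) \<delta> > 0"
    unfolding reval_monic_quadratic by linarith
  then show ?thesis
    using reval_monic_quadratic_signs[OF roots] by (rule not_mult_closed_S_plusI[rotated 2])
qed

lemma not_mult_closed_S_minus:
  assumes "\<delta> \<noteq> \<alpha>"
  shows "\<not> mult_closed (S_minus \<delta> \<inter> pos_at \<alpha>)"
proof -
  obtain r t where roots: "of_rat r < \<delta>" "\<delta> < of_rat t" "\<alpha> \<notin> {of_rat r..of_rat t}"
    and "of_rat r + of_rat t > 2 * \<delta>"
    using rat_roots_around_above[OF assms] by blast
  then have "reval (pderiv ([:-r, 1:] * [:-t, 1:])) \<delta> < 0"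
    unfolding reval_monic_quadratic by linarith
  then show ?thesis
    using reval_monic_quadratic_signs[OF roots] by (rule not_mult_closed_S_minusI[rotated 2])
qed

theorem lemma4p14:
  fixes \<alpha> :: real
  shows "(\<forall>\<beta> \<gamma>. \<beta> \<noteq> \<alpha> \<and> \<gamma> \<noteq> \<alpha> \<and> \<beta> \<noteq> \<gamma> \<longrightarrow>
            \<not> mult_closed (S_real \<beta> \<gamma> \<inter> pos_at \<alpha>))
       \<and> (\<forall>\<beta>. \<beta> \<noteq> \<alpha> \<longrightarrow> \<not> mult_closed (S_real \<alpha> \<beta> \<inter> pos_at \<alpha>))
       \<and> (\<forall>z. z \<notin> \<real> \<longrightarrow> \<not> mult_closed (S_cplx z \<inter> pos_at \<alpha>))
       \<and> (\<forall>\<delta>. \<delta> \<noteq> \<alpha> \<longrightarrow>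
            \<not> mult_closed (S_plus \<delta> \<inter> pos_at \<alpha>) \<and> \<not> mult_closed (S_minus \<delta> \<inter> pos_at \<alpha>))"
  by (simp add: not_mult_closed_S_real not_mult_closed_S_real_at not_mult_closed_S_cplx
      not_mult_closed_S_plus not_mult_closed_S_minus)

end
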